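(* Let $q$ be a prime, let $c\in\mathbb{F}_q$, let $a_1,a_2,a_3\in\mathbb{F}_q\setminus\{0\}$, and let $\gamma_1,\gamma_2,\gamma_3$ be permutations of $\mathbb{F}_q$. If $\gamma_1(x_1)+\gamma_2(x_2)+\gamma_3(x_3)=c$ for all $x_1,x_2,x_3\in\mathbb{F}_q$ satisfying $a_1x_1+a_2x_2+a_3x_3=0$, then each $\gamma_i$ ($i=1,2,3$) is an affine transformation of $\mathbb{F}_q$, i.e. of the form $x\mapsto ux+w$ with $u,w\in\mathbb{F}_q$. *)

theory Defs
  imports "HOL-Computational_Algebra.Primes" "HOL-Library.Cardinality"
begin

(* F_q is modelled as an arbitrary finite field type 'a whose cardinality is a prime q
   (any such field is the prime field F_q). *)

definition affine_map :: "('a::field \<Rightarrow> 'a) \<Rightarrow> bool" where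
  "affine_map g \<longleftrightarrow> (\<exists>u w. \<forall>x. g x = u * x + w)"

end

theory Submission
  imports Defs "HOL-Number_Theory.Residues"
begin

text \<open>Substituting \<open>s = a1 x1\<close>, \<open>t = a2 x2\<close> turns the hypothesis into the Pexider equation
  \<open>g1 s + g2 t + f (s + t) = c\<close>, which forces \<open>f - f 0\<close> to be additive.  In a field of prime
  order every element is a sum of ones, so an additive map is multiplication by its value at 1;
  hence \<open>f\<close>, and with it \<open>g1\<close>, \<open>g2\<close> and the \<open>\<gamma>i\<close>, are affine.\<close>

lemma CHAR_eq_CARD_if_prime_CARD:
  assumes "prime CARD('a::{ring_1,finite})"
  shows "CHAR('a) = CARD('a)"
proof -
  have "CHAR('a) dvd CARD('a)" by (rule CHAR_dvd_CARD)
  moreover have "CHAR('a) \<noteq> 1" by simp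
  ultimately show ?thesis using assms prime_nat_iff by blast
qed

lemma range_of_nat_eq_UNIV_if_prime_CARD:
  assumes "prime CARD('a::{ring_1,finite})"
  shows "range (of_nat :: nat \<Rightarrow> 'a) = UNIV"
proof -
  have "card (of_nat ` {..<CHAR('a)} :: 'a set) = CHAR('a)"
    by (subst card_image) (auto intro: inj_onI simp: of_nat_eq_iff_cong_CHAR cong_def)
  then have "(of_nat ` {..<CHAR('a)} :: 'a set) = UNIV"
    using CHAR_eq_CARD_if_prime_CARD[OF assms] by (simp add: card_subset_eq)
  then show ?thesis by blast
qed

lemma additive_of_nat:
  fixes F :: "'a::ring_1 \<Rightarrow> 'a"
  assumes add: "\<And>s t. F (s + t) = F s + F t"
  shows "F (of_nat n) = of_nat n * F 1"
proof (induction n)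
  case 0
  have "F 0 + F 0 = F 0" using add[of 0 0] by simp
  then show ?case by simp
next
  case (Suc n)
  then show ?case using add[of "of_nat n" 1] by (simp add: algebra_simps)
qed

lemma additive_eq_mult_if_prime_CARD:
  fixes F :: "'a::{ring_1,finite} \<Rightarrow> 'a"
  assumes "prime CARD('a)"
    and "\<And>s t. F (s + t) = F s + F t"
  shows "F x = x * F 1"
  using range_of_nat_eq_UNIV_if_prime_CARD[OF assms(1)] additive_of_nat[OF assms(2)]
  by (metis UNIV_I image_iff)

lemma affine_map_if_Pexider_equation:
  fixes f g1 g2 :: "'a::{field,finite} \<Rightarrow> 'a"
  assumes "prime CARD('a)"
    and eq: "\<And>s t. g1 s + g2 t + f (s + t) = c"
  shows "affine_map f \<and> affine_map g1 \<and> affine_map g2"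
proof -
  have f_g1: "f s = c - g2 0 - g1 s" for s using eq[of s 0] by (simp add: algebra_simps)
  have f_g2: "f t = c - g1 0 - g2 t" for t using eq[of 0 t] by (simp add: algebra_simps)
  have f_sum: "f (s + t) = c - g1 s - g2 t" for s t using eq[of s t] by (simp add: algebra_simps)
  define F where "F s = f s - f 0" for s
  have "F (s + t) = F s + F t" for s t
    unfolding F_def f_sum f_g1[of s] f_g2[of t] f_g2[of 0] by (simp add: algebra_simps)
  then have "F x = x * F 1" for x
    using additive_eq_mult_if_prime_CARD[OF assms(1)] by blast
  then have f_affine: "f x = F 1 * x + f 0" for x unfolding F_def by (simp add: algebra_simps)
  have "g1 x = - F 1 * x + (c - g2 0 - f 0)" for x
    using f_g1[of x] f_affine[of x] by (simp add: algebra_simps)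
  moreover have "g2 x = - F 1 * x + (c - g1 0 - f 0)" for x
    using f_g2[of x] f_affine[of x] by (simp add: algebra_simps)
  ultimately show ?thesis using f_affine unfolding affine_map_def by blast
qed

lemma affine_map_comp_scale:
  assumes "affine_map g"
  shows "affine_map (\<lambda>x. g (k * x))"
  using assms unfolding affine_map_def by (metis mult.assoc)

theorem lemma4:
  fixes c a1 a2 a3 :: "'a::{field,finite}"
    and \<gamma>1 \<gamma>2 \<gamma>3 :: "'a \<Rightarrow> 'a"
  assumes "prime CARD('a)"
    and "a1 \<noteq> 0" and "a2 \<noteq> 0" and "a3 \<noteq> 0"
    and "bij \<gamma>1" and "bij \<gamma>2" and "bij \<gamma>3"
    and "\<forall>x1 x2 x3. a1 * x1 + a2 * x2 + a3 * x3 = 0 \<longrightarrow>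
            \<gamma>1 x1 + \<gamma>2 x2 + \<gamma>3 x3 = c"
  shows "affine_map \<gamma>1 \<and> affine_map \<gamma>2 \<and> affine_map \<gamma>3"
proof -
  define g1 where "g1 s = \<gamma>1 (s / a1)" for s
  define g2 where "g2 s = \<gamma>2 (s / a2)" for s
  define f where "f s = \<gamma>3 (- s / a3)" for s
  have "g1 s + g2 t + f (s + t) = c" for s t
  proof -
    have "a1 * (s / a1) + a2 * (t / a2) + a3 * (- (s + t) / a3) = 0"
      using assms(2-4) by (simp add: field_simps)
    then show ?thesis using assms(8) unfolding g1_def g2_def f_def by blast
  qed
  then have "affine_map f \<and> affine_map g1 \<and> affine_map g2"
    using affine_map_if_Pexider_equation[OF assms(1)] by blast
  moreover have "\<gamma>1 = (\<lambda>x. g1 (a1 * x))" "\<gamma>2 = (\<lambda>x. g2 (a2 * x))" "\<gamma>3 = (\<lambda>x. f (- a3 * x))"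
    using assms(2-4) unfolding g1_def g2_def f_def by auto
  ultimately show ?thesis using affine_map_comp_scale by metis
qed

end
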